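(* Let $k\ge 2$, $w=2^k-1$, $v=2^{k-1}$. For $j\ge 1$ let $\tilde U_j$ be the sequence of $2^j-1$ jumps of length $1$ followed by one jump of length $2^j+2^{j-1}-1$, and let $\tilde U_j^R$ be its reverse. Let $$\tilde H = 2w+v,\ \tilde U_{k-1},\tilde U_{k-2},\dots,\tilde U_2,\ 1,\ 2w,\ \tilde U_1^R,\tilde U_2^R,\dots,\tilde U_{k-1}^R,\ v+1.$$ Consider a line of $3w+2$ cells indexed $0,\dots,3w+1$ in which cells $w,\dots,2w-1$ are blocked, the frog stands on cell $3w$, and all other cells are empty, except that one cell $p$ with even index $p\in\{0,2,\dots,w-1\}$ may be either empty or already visited. Then for every such even $p$ there is a valid execution of $\tilde H$ which never lands on cell $p$, visits every other empty cell exactly once, and ends with the frog on cell $3w+1$.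
   Context: A frog on a line of cells performs a given sequence of positive jump lengths; for each jump it chooses a direction, moving from position $q$ to $q+J$ or $q-J$. An execution is valid if every landing cell lies on the line, is not blocked, and has not been visited before (the starting cell and any cell marked as already visited count as visited). Cells are indexed from $0$. *)

theory Defs
  imports Main
begin

text \<open>A frog on a line of n cells 0..n-1. Positions are integers so that q - J may be
  negative (then the landing is off the line).  frog_run n B V q Js rs: starting at q with
  visited set V (already containing q) and blocked set B, performing jumps Js lands
  successively on the cells rs, each landing valid.\<close>
fun frog_run :: "nat \<Rightarrow> int set \<Rightarrow> int set \<Rightarrow> int \<Rightarrow> nat list \<Rightarrow> int list \<Rightarrow> bool" where
  "frog_run n B V q [] [] = True"
| "frog_run n B V q (J # Js) (r # rs) =
     ((r = q + int J \<or> r = q - int J) \<and> 0 \<le> r \<and> r < int n \<and> r \<notin> B \<and> r \<notin> V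
      \<and> frog_run n B (insert r V) r Js rs)"
| "frog_run n B V q _ _ = False"

definition valid_execution :: "nat \<Rightarrow> int set \<Rightarrow> int set \<Rightarrow> int \<Rightarrow> nat list \<Rightarrow> int list \<Rightarrow> bool" where
  "valid_execution n B V s Js rs = frog_run n B (insert s V) s Js rs"

definition Ut :: "nat \<Rightarrow> nat list" where
  "Ut j = replicate (2^j - 1) 1 @ [2^j + 2^(j-1) - 1]"

definition Ht :: "nat \<Rightarrow> nat list" where
  "Ht k = (let w = 2^k - 1; v = 2^(k-1) in
     [2*w + v] @ concat (map Ut (rev [2..<k])) @ [1, 2*w]
     @ concat (map (\<lambda>j. rev (Ut j)) [1..<k]) @ [v + 1])"

end

theory Submission
  imports Defs
begin

(* The block of order j around an odd centre c consists of the 2^j - 1 cells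
   c - 2^(j-1) + 1, ..., c + 2^(j-1) - 1. Started at c, the jumps U~_(j-1), ..., U~_2 can visit
   every cell of the block except the two neighbours of the final cell l, and for any even p in
   the block l can be chosen with p = l - 1 or p = l + 1: for p left of c, run with unit jumps
   through the right half, whose last cell is at distance 2^(j-1) + 2^(j-2) - 1 from the centre
   of the left half, and recurse there; for p right of c, reflect the whole path at c.

   The first jump of H~ brings the frog from 3w to the centre of the left block {0..w-1}, of
   order k. After sweeping it, the frog jumps 1 to the free neighbour e of l other than p, then
   2w to the copy e + 2w in the right block {2w..3w-1}; U~_1^R = (2, 1) visits p + 2w and l + 2w,
   and the reversed sweep retraces the left path shifted by 2w back to the centre, from which
   v + 1 reaches 3w + 1. *)

fun jumps :: "int list \<Rightarrow> nat list" where
  "jumps (x # y # zs) = nat \<bar>y - x\<bar> # jumps (y # zs)"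
| "jumps _ = []"

lemma frog_run_iff_jumps:
  "frog_run n B V q Js rs \<longleftrightarrow> Js = jumps (q # rs) \<and> distinct rs \<and> set rs \<subseteq> {0..<int n} - B - V"
proof (induction Js arbitrary: rs q V)
  case Nil
  then show ?case by (cases rs) auto
next
  case (Cons J Js)
  then show ?case by (cases rs) auto
qed

lemma jumps_Cons: "ys \<noteq> [] \<Longrightarrow> jumps (x # ys) = nat \<bar>hd ys - x\<bar> # jumps ys"
  by (cases ys) auto

lemma jumps_append:
  "xs \<noteq> [] \<Longrightarrow> ys \<noteq> [] \<Longrightarrow> jumps (xs @ ys) = jumps xs @ nat \<bar>hd ys - last xs\<bar> # jumps ys"
  by (induction xs rule: jumps.induct) (auto simp: neq_Nil_conv)

lemma jumps_rev: "jumps (rev xs) = rev (jumps xs)"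
proof (induction xs rule: jumps.induct)
  case (1 x y zs)
  then show ?case
    using jumps_append[of "rev zs @ [y]" "[x]"] by (simp add: abs_minus_commute)
qed simp_all

lemma jumps_map_isometry:
  assumes "\<And>x y. \<bar>f y - f x\<bar> = \<bar>y - x\<bar>"
  shows "jumps (map f xs) = jumps xs"
  by (induction xs rule: jumps.induct) (simp_all add: assms)

lemma jumps_upto: "jumps [a..b] = replicate (nat (b - a)) 1"
proof (induction a b rule: upto.induct)
  case (1 a b)
  show ?case
  proof (cases "a < b")
    case True
    then have "nat (b - a) = Suc (nat (b - (a + 1)))"
      by simp
    then show ?thesis
      using 1 True by (simp add: upto_rec1[of a b] upto_rec1[of "a + 1" b] jumps_Cons)
  qed (cases "a = b"; simp)
qed

definition Ut_chain :: "nat \<Rightarrow> nat list" where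
  "Ut_chain j = concat (map Ut (rev [2..<j]))"

lemma Ut_chain_2 [simp]: "Ut_chain 2 = []"
  by (simp add: Ut_chain_def)

lemma Ut_chain_Suc: "2 \<le> j \<Longrightarrow> Ut_chain (Suc j) = Ut j @ Ut_chain j"
  by (simp add: Ut_chain_def)

definition block_path :: "nat \<Rightarrow> int \<Rightarrow> int list \<Rightarrow> bool" where
  "block_path j c P \<longleftrightarrow> P \<noteq> [] \<and> hd P = c \<and> jumps P = Ut_chain j \<and> distinct P
     \<and> {last P - 1, last P + 1} \<subseteq> {c - 2^(j-1) + 1 .. c + 2^(j-1) - 1}
     \<and> set P = {c - 2^(j-1) + 1 .. c + 2^(j-1) - 1} - {last P - 1, last P + 1}"

lemma block_path_reflect:
  assumes "block_path j c P"
  shows "block_path j c (map (\<lambda>x. 2*c - x) P)"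
proof -
  let ?f = "\<lambda>x. 2*c - x"
  have "jumps (map ?f P) = jumps P"
    by (rule jumps_map_isometry) (simp add: abs_minus_commute)
  moreover have "x \<in> set (map ?f P) \<longleftrightarrow> 2*c - x \<in> set P" for x
    by force
  ultimately show ?thesis
    using assms unfolding block_path_def by (auto simp: hd_map last_map distinct_map inj_on_def)
qed

lemma block_path_reflect_free_cell:
  assumes "block_path j c P" and "q \<in> {last P - 1, last P + 1}"
  shows "\<exists>P'. block_path j c P' \<and> 2*c - q \<in> {last P' - 1, last P' + 1}"
proof (intro exI conjI)
  show "block_path j c (map (\<lambda>x. 2*c - x) P)"
    using assms(1) by (rule block_path_reflect)
  have "last (map (\<lambda>x. 2*c - x) P) = 2*c - last P"
    using assms(1) by (simp add: block_path_def last_map)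
  then show "2*c - q \<in> {last (map (\<lambda>x. 2*c - x) P) - 1, last (map (\<lambda>x. 2*c - x) P) + 1}"
    using assms(2) by auto
qed

lemma block_path_extend:
  assumes "2 \<le> j" and P: "block_path j (c - 2^(j-1)) P"
  shows "block_path (Suc j) c ([c..c + 2^j - 1] @ P)"
proof -
  define h :: int where "h = 2^(j-1)"
  have two_h: "(2::int)^j = 2*h"
    unfolding h_def using assms(1) power_minus_mult[of j "2::int"] by simp
  have h2: "h \<ge> 2"
    unfolding h_def using power_increasing[of 1 "j-1" "2::int"] assms(1) by simp
  let ?run = "[c..c + 2*h - 1]"
  let ?l = "last P"
  have "int (2^j - 1) = 2*h - 1" and "int (2^j + 2^(j-1) - 1) = 3*h - 1"
    using two_h unfolding h_def by (simp_all add: of_nat_diff trans_le_add1)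
  then have nat_run: "2^j - 1 = nat (2*h - 1)" and nat_jump: "2^j + 2^(j-1) - 1 = nat (3*h - 1)"
    by linarith+
  have P_props: "P \<noteq> []" "hd P = c - h" "jumps P = Ut_chain j" "distinct P"
      "{?l - 1, ?l + 1} \<subseteq> {c - 2*h + 1 .. c - 1}"
      "set P = {c - 2*h + 1 .. c - 1} - {?l - 1, ?l + 1}"
    using P unfolding block_path_def h_def[symmetric] by (simp_all add: algebra_simps)
  have block_split: "{c - 2*h + 1 .. c + 2*h - 1} = {c - 2*h + 1 .. c - 1} \<union> {c .. c + 2*h - 1}"
    using h2 by auto
  have "last ?run = c + 2*h - 1"
    using h2 by (simp add: upto_rec2)
  then have "nat \<bar>hd P - last ?run\<bar> = 2^j + 2^(j-1) - 1"
    using P_props(2) h2 nat_jump by simp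
  moreover have "jumps ?run = replicate (2^j - 1) 1"
    using nat_run by (simp add: jumps_upto)
  ultimately have "jumps (?run @ P) = Ut j @ Ut_chain j"
    using P_props(1,3) h2 by (simp add: jumps_append Ut_def)
  then have "jumps (?run @ P) = Ut_chain (Suc j)"
    using assms(1) by (simp add: Ut_chain_Suc)
  moreover have "distinct (?run @ P)"
  proof -
    have "set P \<subseteq> {c - 2*h + 1 .. c - 1}"
      using P_props(6) by blast
    then show ?thesis
      using P_props(4) by force
  qed
  moreover have "set (?run @ P) = {c - 2*h + 1 .. c + 2*h - 1} - {?l - 1, ?l + 1}"
  proof -
    have "{c - 2*h + 1 .. c - 1} \<inter> {c .. c + 2*h - 1} = {}"
      by auto
    then show ?thesis
      using P_props(5,6) unfolding block_split set_append set_upto by blast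
  qed
  moreover have "{?l - 1, ?l + 1} \<subseteq> {c - 2*h + 1 .. c + 2*h - 1}"
    using P_props(5) unfolding block_split by blast
  ultimately show ?thesis
    using P_props(1) h2 unfolding block_path_def by (simp add: two_h upto_rec1)
qed

lemma block_path_exists:
  assumes "2 \<le> j" "odd c" "even p" "\<bar>p - c\<bar> < 2^(j-1)"
  shows "\<exists>P. block_path j c P \<and> p \<in> {last P - 1, last P + 1}"
  using assms
proof (induction j arbitrary: c p rule: dec_induct)
  case base
  then have "p \<in> {c - 1, c + 1}"
    by (auto simp: abs_less_iff elim!: oddE evenE)
  moreover have "block_path 2 c [c]"
    by (auto simp: block_path_def)
  ultimately show ?case by auto
next
  case (step j)
  define h :: int where "h = 2^(j-1)"
  have two_h: "(2::int)^j = 2*h"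
    unfolding h_def using step.hyps(1) power_minus_mult[of j "2::int"] by simp
  have left: "\<exists>P. block_path (Suc j) c P \<and> q \<in> {last P - 1, last P + 1}"
    if "even q" "c - 2*h < q" "q < c" for q
  proof -
    have "odd (c - h)"
      using step.prems(1) step.hyps(1) unfolding h_def by simp
    moreover have "\<bar>q - (c - h)\<bar> < 2^(j-1)"
      using that unfolding h_def by auto
    ultimately obtain P where P: "block_path j (c - h) P" "q \<in> {last P - 1, last P + 1}"
      using step.IH \<open>even q\<close> unfolding h_def by blast
    then have "block_path (Suc j) c ([c..c + 2^j - 1] @ P)"
      using block_path_extend[OF step.hyps(1)] unfolding h_def by blast
    moreover have "last ([c..c + 2^j - 1] @ P) = last P"
      using P(1) by (simp add: block_path_def)
    ultimately show ?thesis
      using P(2) by metis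
  qed
  have "p \<noteq> c"
    using step.prems(1,2) by auto
  then consider "p < c" | "2*c - p < c"
    by linarith
  then show ?case
  proof cases
    case 1
    moreover have "c - 2*h < p"
      using step.prems(3) two_h by (simp add: abs_less_iff)
    ultimately show ?thesis
      using left[of p] step.prems(2) by blast
  next
    case 2
    moreover have "c - 2*h < 2*c - p"
      using step.prems(3) two_h by (simp add: abs_less_iff)
    ultimately obtain P where "block_path (Suc j) c P" "2*c - p \<in> {last P - 1, last P + 1}"
      using left[of "2*c - p"] step.prems(2) by auto
    then show ?thesis
      using block_path_reflect_free_cell by fastforce
  qed
qed

lemma Ht_split:
  assumes "2 \<le> k"
  shows "Ht k = [2*(2^k-1) + 2^(k-1)] @ Ut_chain k @ [1, 2*(2^k-1), 2, 1] @ rev (Ut_chain k) @ [2^(k-1) + 1]"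
proof -
  have "[1..<k] = 1 # [2..<k]"
    using assms upt_conv_Cons[of 1 k] by (simp add: numeral_2_eq_2)
  moreover have "rev (Ut 1) = [2, 1]"
    by (simp add: Ut_def)
  moreover have "rev (concat (map Ut (rev xs))) = concat (map (\<lambda>j. rev (Ut j)) xs)" for xs
    by (induction xs) simp_all
  ultimately show ?thesis
    by (simp add: Ht_def Ut_chain_def Let_def)
qed

lemma Ht_jumps:
  assumes "2 \<le> k" and L: "block_path k (2^(k-1) - 1) L" and pe: "{p, e} = {last L - 1, last L + 1}"
  defines "w \<equiv> (2::int)^k - 1"
  shows "jumps (3*w # L @ e # map (\<lambda>x. x + 2*w) (e # p # rev L) @ [3*w + 1]) = Ht k"
proof -
  define v :: nat where "v = 2^(k-1)"
  have two_v: "2^k = 2*v"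
    unfolding v_def using assms(1) power_minus_mult[of k "2::nat"] by simp
  have v2: "v \<ge> 2"
    unfolding v_def using power_increasing[of 1 "k-1" "2::nat"] assms(1) by simp
  have w: "w = 2 * int v - 1"
    unfolding w_def v_def using assms(1) power_minus_mult[of k "2::int"] by simp
  have L_props: "L \<noteq> []" "hd L = int v - 1" "jumps L = Ut_chain k"
    using L unfolding block_path_def v_def by simp_all
  have jump_in: "nat \<bar>(int v - 1) - 3*w\<bar> = 2*(2^k-1) + 2^(k-1)"
   and jump_out: "nat \<bar>(3*w + 1) - (int v - 1 + 2*w)\<bar> = 2^(k-1) + 1"
   and jump_across: "nat \<bar>(e + 2*w) - e\<bar> = 2*(2^k-1)"
    using v2 unfolding w two_v v_def[symmetric] by (simp_all add: nat_diff_distrib')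
  have "\<bar>p - e\<bar> = 2" "\<bar>last L - p\<bar> = 1" "\<bar>e - last L\<bar> = 1"
    using pe by (auto simp: doubleton_eq_iff)
  then have "jumps (e # p # rev L) = 2 # 1 # rev (Ut_chain k)"
    using L_props by (simp add: jumps_Cons jumps_rev hd_rev)
  moreover have "jumps (map (\<lambda>x. x + 2*w) (e # p # rev L)) = jumps (e # p # rev L)"
    by (rule jumps_map_isometry) simp
  ultimately show ?thesis
    using L_props jump_in jump_out jump_across \<open>\<bar>e - last L\<bar> = 1\<close>
    by (simp add: Ht_split[OF assms(1)] jumps_append jumps_Cons last_map last_rev)
qed

lemma block_path_order_k_cells:
  assumes "1 \<le> k" and L: "block_path k (2^(k-1) - 1) L" and pe: "{p, e} = {last L - 1, last L + 1}"
  shows "distinct (L @ [e])" and "set (L @ [e]) = {0..2^k - 2} - {p}"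
    and "distinct (e # p # rev L)" and "set (e # p # rev L) = {0..2^k - 2}"
proof -
  have "(2::int)^k = 2 * 2^(k-1)"
    using assms(1) power_minus_mult[of k "2::int"] by simp
  then have bounds: "2^(k-1) - 1 - 2^(k-1) + 1 = (0::int)" "2^(k-1) - 1 + 2^(k-1) - 1 = (2::int)^k - 2"
    by linarith+
  have L_props: "distinct L" "{p, e} \<subseteq> {0..2^k - 2}" "set L = {0..2^k - 2} - {p, e}"
    using L pe unfolding block_path_def bounds by simp_all
  have "p \<noteq> e"
    using pe by (auto simp: doubleton_eq_iff)
  moreover have "p \<notin> set L" "e \<notin> set L"
    using L_props(3) by blast+
  ultimately show "distinct (L @ [e])" "distinct (e # p # rev L)"
    using L_props(1) by simp_all
  show "set (e # p # rev L) = {0..2^k - 2}"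
    using L_props(2,3) unfolding set_simps set_rev by blast
  have "e \<in> {0..2^k - 2}"
    using L_props(2) by simp
  then show "set (L @ [e]) = {0..2^k - 2} - {p}"
    using \<open>p \<noteq> e\<close> unfolding set_append L_props(3) by fastforce
qed

lemma Ht_path_cells:
  assumes "1 \<le> k" and L: "block_path k (2^(k-1) - 1) L" and pe: "{p, e} = {last L - 1, last L + 1}"
  defines "w \<equiv> (2::int)^k - 1"
  defines "rs \<equiv> L @ e # map (\<lambda>x. x + 2*w) (e # p # rev L) @ [3*w + 1]"
  shows "distinct rs" and "set rs = {0..3*w + 1} - {w..<2*w} - {3*w, p}"
proof -
  have "2^k - 2 = w - 1" "w \<ge> 1"
    unfolding w_def using one_less_power[of "2::int" k] assms(1) by simp_all
  note cells = block_path_order_k_cells[OF assms(1-3), unfolded this(1)]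
  let ?right = "map (\<lambda>x. x + 2*w) (e # p # rev L)"
  have "set ?right = (\<lambda>x. x + 2*w) ` {0..w-1}"
    by (simp only: set_map cells(4))
  then have right_set: "set ?right = {2*w..3*w-1}"
    by (simp add: image_add_atLeastAtMost' add.commute)
  then have right_cells: "set (?right @ [3*w + 1]) = {2*w..3*w-1} \<union> {3*w + 1}"
    unfolding set_append by simp
  have rs_split: "rs = (L @ [e]) @ (?right @ [3*w + 1])"
    unfolding rs_def by simp
  have "distinct ?right"
    by (rule distinct_map[THEN iffD2]) (use cells(3) in \<open>simp add: inj_on_def\<close>)
  moreover have "3*w + 1 \<notin> set ?right"
    unfolding right_set by simp
  ultimately have "distinct (?right @ [3*w + 1])"
    by simp
  moreover have "({0..w-1} - {p}) \<inter> ({2*w..3*w-1} \<union> {3*w + 1}) = {}"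
    using \<open>w \<ge> 1\<close> by auto
  ultimately show "distinct rs"
    using cells(1) unfolding rs_split distinct_append cells(2) right_cells by blast
  have "p \<in> {0..w-1}"
    unfolding cells(4)[symmetric] by simp
  then have "{0..3*w + 1} - {w..<2*w} - {3*w, p} = ({0..w-1} - {p}) \<union> ({2*w..3*w-1} \<union> {3*w + 1})"
    using \<open>w \<ge> 1\<close> by auto
  then show "set rs = {0..3*w + 1} - {w..<2*w} - {3*w, p}"
    unfolding rs_split set_append[of "L @ [e]"] cells(2) right_cells by simp
qed

theorem mainTheorem9:
  fixes k p :: nat and pvis :: bool
  assumes "k \<ge> 2" and "even p" and "p < 2^k - 1"
  shows "\<exists>rs. valid_execution (3*(2^k-1)+2) {int (2^k-1)..<int (2*(2^k-1))}
                 (if pvis then {int p} else {}) (int (3*(2^k-1))) (Ht k) rs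
             \<and> int p \<notin> set rs
             \<and> distinct rs
             \<and> set rs = {0..int (3*(2^k-1)+1)} - {int (2^k-1)..<int (2*(2^k-1))}
                          - {int (3*(2^k-1)), int p}
             \<and> last rs = int (3*(2^k-1)+1)"
proof -
  define w :: int where "w = 2^k - 1"
  have casts: "int (2^k - 1) = w" "int (2*(2^k-1)) = 2*w" "int (3*(2^k-1)) = 3*w"
      "int (3*(2^k-1)+1) = 3*w + 1" "int (3*(2^k-1)+2) = 3*w + 2"
    unfolding w_def by simp_all
  have "(2::int)^k = 2 * 2^(k-1)"
    using assms(1) power_minus_mult[of k "2::int"] by simp
  moreover have "int p < w"
    using assms(3) casts(1) by linarith
  ultimately have "odd ((2::int)^(k-1) - 1)" "\<bar>int p - (2^(k-1) - 1)\<bar> < 2^(k-1)"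
    using assms(1) unfolding w_def by auto
  then obtain L where L: "block_path k (2^(k-1) - 1) L" "int p \<in> {last L - 1, last L + 1}"
    using block_path_exists assms(1,2) by (metis even_of_nat)
  define e where "e = 2 * last L - int p"
  have pe: "{int p, e} = {last L - 1, last L + 1}"
    using L(2) unfolding e_def by auto
  define rs where "rs = L @ e # map (\<lambda>x. x + 2*w) (e # int p # rev L) @ [3*w + 1]"
  have "Ht k = jumps (3*w # rs)"
    using Ht_jumps[OF assms(1) L(1) pe] unfolding rs_def w_def by simp
  moreover have "distinct rs" and cells: "set rs = {0..3*w + 1} - {w..<2*w} - {3*w, int p}"
    using Ht_path_cells[OF _ L(1) pe] assms(1) unfolding rs_def w_def by simp_all
  moreover have "set rs \<subseteq> {0..<3*w + 2} - {w..<2*w} - insert (3*w) (if pvis then {int p} else {})"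
    unfolding cells by auto
  moreover have "int p \<notin> set rs"
    unfolding cells by simp
  moreover have "last rs = 3*w + 1"
    unfolding rs_def by simp
  ultimately show ?thesis
    unfolding valid_execution_def frog_run_iff_jumps casts
    by (intro exI[of _ rs]) (simp only: simp_thms)
qed

end
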